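(* Let $f$ be a complex polynomial of degree $d>1$ and let $K(f)=\{z\in\mathbb{C}:(f^k(z))_k \text{ is bounded}\}$ be its filled-in Julia set. Then the sequence of iterates $(f^k)_{k\ge1}$, where $f^k=f\circ\cdots\circ f$ ($k$ times), centers on $K(f)$.
   Context: Definition (centering): Let $C\subset\mathbb{C}$ be non-empty and compact. A sequence of polynomials $(q_k)_k$ centers on $C$ if there exist $R>0$ and $k_0$ such that (1) all zeros of $q_k$ lie in $\mathbb{D}(0,R)$ for $k\ge k_0$; (2) for every closed $L\subset\mathbb{C}$ with $L\cap C=\emptyset$ there is $M(L)$ such that the number of zeros of $q_k$ in $L$ (with multiplicity) is at most $M(L)$ for $k\ge k_0$. *)

theory Defs
  imports "HOL-Analysis.Analysis" "HOL-Computational_Algebra.Polynomial"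
begin

definition zero_count :: "complex poly \<Rightarrow> complex set \<Rightarrow> nat" where
  "zero_count q L = (\<Sum>z\<in>{z\<in>L. poly q z = 0}. order z q)"

definition centers_on :: "(nat \<Rightarrow> complex poly) \<Rightarrow> complex set \<Rightarrow> bool" where
  "centers_on q C \<longleftrightarrow>
     (\<exists>R>0. \<exists>k0. (\<forall>k\<ge>k0. \<forall>z. poly (q k) z = 0 \<longrightarrow> z \<in> ball 0 R) \<and>
        (\<forall>L. closed L \<and> L \<inter> C = {} \<longrightarrow> (\<exists>M. \<forall>k\<ge>k0. zero_count (q k) L \<le> M)))"

definition poly_iter :: "complex poly \<Rightarrow> nat \<Rightarrow> complex poly" where
  "poly_iter f k = ((\<lambda>p. pcompose f p) ^^ k) [:0, 1:]"

definition filled_julia :: "complex poly \<Rightarrow> complex set" where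
  "filled_julia f = {z. bounded (range (\<lambda>k. ((poly f) ^^ k) z))}"

end

theory Submission
  imports Defs "HOL-Computational_Algebra.Fundamental_Theorem_Algebra"
begin

text \<open>Outside a large disc \<open>|z| > R\<close> a polynomial of degree at least two strictly increases
  the modulus, so this exterior is forward invariant: an orbit that ever leaves the disc
  \<open>|z| \<le> R\<close> never comes back, and in particular never hits \<open>0\<close>. Hence all zeros of all
  iterates lie in the disc. If a closed set \<open>L\<close> misses the filled Julia set, every point of
  the compact set \<open>L \<inter> {|z| \<le> R}\<close> leaves the disc after finitely many steps, and by
  compactness uniformly so after \<open>N\<close> steps; therefore \<open>f\<^sup>k\<close> has no zeros in \<open>L\<close> for
  \<open>k \<ge> N\<close>, and the finitely many remaining zero counts are bounded.\<close>

lemma poly_poly_iter: "poly (poly_iter f k) = poly f ^^ k"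
  by (induction k) (auto simp: poly_iter_def poly_pcompose)

lemma continuous_on_funpow:
  fixes g :: "'a::topological_space \<Rightarrow> 'a"
  assumes "continuous_on UNIV g"
  shows "continuous_on UNIV (g ^^ n)"
proof (induction n)
  case (Suc n)
  have "continuous_on UNIV (g \<circ> (g ^^ n))"
    by (rule continuous_on_compose[OF Suc continuous_on_subset[OF assms subset_UNIV]])
  then show ?case by simp
qed (simp add: id_def)

lemma funpow_mem_invariant:
  assumes "g ` S \<subseteq> S" "(g ^^ n) z \<in> S" "n \<le> m"
  shows "(g ^^ m) z \<in> S"
proof -
  have "(g ^^ j) x \<in> S" if "x \<in> S" for j x
    using that assms(1) by (induction j) auto
  moreover have "(g ^^ m) z = (g ^^ (m - n)) ((g ^^ n) z)"
    using \<open>n \<le> m\<close> by (metis funpow_add le_add_diff_inverse2 o_apply)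
  ultimately show ?thesis using assms(2) by metis
qed

lemma compact_uniform_escape:
  fixes g :: "'a::real_normed_vector \<Rightarrow> 'a"
  assumes "continuous_on UNIV g" "compact K"
    and unbounded: "\<And>z. z \<in> K \<Longrightarrow> \<not> bounded (range (\<lambda>k. (g ^^ k) z))"
  shows "\<exists>N. \<forall>z\<in>K. \<exists>n<N. R < norm ((g ^^ n) z)"
proof -
  define U where "U n = {z. R < norm ((g ^^ n) z)}" for n
  have "open (U n)" for n
    unfolding U_def
    by (intro open_Collect_less continuous_on_const continuous_on_norm
        continuous_on_funpow assms(1))
  moreover have "K \<subseteq> (\<Union>n. U n)"
  proof
    fix z assume "z \<in> K"
    then obtain n where "\<not> norm ((g ^^ n) z) \<le> R"
      using unbounded unfolding bounded_iff by auto
    then show "z \<in> (\<Union>n. U n)" by (auto simp: U_def not_le)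
  qed
  ultimately obtain C where "finite C" "K \<subseteq> (\<Union>n\<in>C. U n)"
    using compactE_image[OF \<open>compact K\<close>] by metis
  moreover obtain N where "C \<subseteq> {..<N}"
    using \<open>finite C\<close> finite_nat_iff_bounded by blast
  ultimately show ?thesis unfolding U_def by blast
qed

lemma escape_radius:
  fixes f :: "complex poly"
  assumes "degree f > 1"
  shows "\<exists>R\<ge>0. \<forall>z. R < norm z \<longrightarrow> norm z < norm (poly f z)"
proof -
  obtain a p where f: "f = pCons a p" by (cases f) auto
  obtain b q where p: "p = pCons b q" by (cases p) auto
  have "q \<noteq> 0" using assms f p by (auto split: if_splits)
  from poly_infinity[OF this, of "2 + norm a" b]
  obtain r where r: "\<And>z. r \<le> norm z \<Longrightarrow> 2 + norm a \<le> norm (poly p z)"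
    using p by auto
  have "norm z < norm (poly f z)" if z: "max r 1 < norm z" for z
  proof -
    have "norm z * (2 + norm a) \<le> norm (z * poly p z)"
      using r z by (simp add: norm_mult mult_left_mono)
    moreover have "norm (z * poly p z) - norm a \<le> norm (poly f z)"
      using f norm_triangle_ineq2[of "z * poly p z" "- a"] by (simp add: add.commute)
    moreover have "1 * (1 + norm a) \<le> norm z * (1 + norm a)"
      using z by (intro mult_right_mono) auto
    ultimately show ?thesis using z by (simp add: algebra_simps)
  qed
  then show ?thesis by (intro exI[of _ "max r 1"]) auto
qed

lemma funpow_nonzero_after_escape:
  fixes g :: "'a::real_normed_vector \<Rightarrow> 'a"
  assumes "\<And>z. R < norm z \<Longrightarrow> R < norm (g z)" "0 \<le> R"
    and "R < norm ((g ^^ n) z)" "n \<le> m"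
  shows "(g ^^ m) z \<noteq> 0"
proof -
  have "(g ^^ m) z \<in> {z. R < norm z}"
    by (rule funpow_mem_invariant[where n = n]) (use assms in auto)
  then show ?thesis using \<open>0 \<le> R\<close> by auto
qed

lemma funpow_eventually_nonzero_on_closed:
  fixes g :: "'a::{real_normed_vector,heine_borel} \<Rightarrow> 'a"
  assumes "continuous_on UNIV g" "\<And>z. R < norm z \<Longrightarrow> R < norm (g z)" "0 \<le> R"
    and "closed L" and unbounded: "\<And>z. z \<in> L \<Longrightarrow> \<not> bounded (range (\<lambda>k. (g ^^ k) z))"
  shows "\<exists>N. \<forall>m\<ge>N. \<forall>z\<in>L. (g ^^ m) z \<noteq> 0"
proof -
  note nonzero = funpow_nonzero_after_escape[of R g, OF assms(2,3)]
  have "compact (L \<inter> cball 0 R)"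
    using \<open>closed L\<close> by (simp add: closed_Int_compact)
  then obtain N where N: "\<forall>z\<in>L \<inter> cball 0 R. \<exists>n<N. R < norm ((g ^^ n) z)"
    using compact_uniform_escape[where R = R, OF assms(1)] unbounded by blast
  have "(g ^^ m) z \<noteq> 0" if "N \<le> m" "z \<in> L" for m z
  proof (cases "norm z \<le> R")
    case True
    with \<open>z \<in> L\<close> have "z \<in> L \<inter> cball 0 R" by simp
    with N obtain n where "n < N" "R < norm ((g ^^ n) z)" by blast
    then show ?thesis using nonzero[of n z m] \<open>N \<le> m\<close> by simp
  next
    case False
    then show ?thesis using nonzero[of 0 z m] by simp
  qed
  then show ?thesis by blast
qed

lemma bounded_if_eventually_zero:
  fixes a :: "nat \<Rightarrow> nat"
  assumes "\<And>k. N \<le> k \<Longrightarrow> a k = 0"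
  shows "\<exists>M. \<forall>k. a k \<le> M"
proof -
  have "a k \<le> (\<Sum>j<N. a j)" for k
    using assms[of k] by (cases "k < N") (auto intro: member_le_sum)
  then show ?thesis by blast
qed

theorem mainTheorem10:
  fixes f :: "complex poly"
  assumes "degree f > 1"
  shows "centers_on (\<lambda>k. poly_iter f (Suc k)) (filled_julia f)"
proof -
  obtain R where "0 \<le> R" and esc: "\<And>z. R < norm z \<Longrightarrow> R < norm (poly f z)"
    using escape_radius[OF assms] by force
  have zeros_in_disc: "norm z \<le> R" if "poly (poly_iter f k) z = 0" for k z
    using funpow_nonzero_after_escape[of R "poly f" 0 z k] esc \<open>0 \<le> R\<close> that
    by (force simp: poly_poly_iter)
  have "\<exists>M. \<forall>k. zero_count (poly_iter f (Suc k)) L \<le> M"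
    if "closed L" "L \<inter> filled_julia f = {}" for L
  proof -
    obtain N where "\<forall>m\<ge>N. \<forall>z\<in>L. (poly f ^^ m) z \<noteq> 0"
      using funpow_eventually_nonzero_on_closed[OF continuous_on_poly[OF continuous_on_id]
          esc \<open>0 \<le> R\<close> \<open>closed L\<close>] \<open>L \<inter> filled_julia f = {}\<close>
      by (auto simp: filled_julia_def)
    then have "{z \<in> L. poly (poly_iter f (Suc k)) z = 0} = {}" if "N \<le> k" for k
      using that by (auto simp: poly_poly_iter simp del: funpow.simps)
    then have "zero_count (poly_iter f (Suc k)) L = 0" if "N \<le> k" for k
      using that unfolding zero_count_def by (metis sum.empty)
    then show ?thesis by (rule bounded_if_eventually_zero)
  qed
  then show ?thesis
    unfolding centers_on_def using \<open>0 \<le> R\<close>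
    by (intro exI[of _ "R + 1"] conjI exI[of _ 0]) (auto dest!: zeros_in_disc)
qed

end
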